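(* (a) If $\tau\in\mathcal{T}$ and the space $(\mathbb{R},\tau)$ is connected, then every interval $I\subset\mathbb{R}$ is connected in $(\mathbb{R},\tau)$. (b) If $F:\mathbb{R}\to\mathbb{R}$ is a function whose graph is a connected subspace of $\mathbb{R}^2$, then $F\cap(I\times\mathbb{R})$ is connected for every interval $I\subset\mathbb{R}$.
   Context: $\eta$ denotes the Euclidean topology on $\mathbb{R}$; $\mathcal{T}$ is the family of all topologies on $\mathbb{R}$ finer than $\eta$. A real function is identified with its graph in $\mathbb{R}^2$ with the subspace topology. *)

theory Defs
  imports "HOL-Analysis.Analysis"
begin

definition fgraph :: "(real \<Rightarrow> real) \<Rightarrow> (real \<times> real) set" where
  "fgraph F = {(x, F x) | x. True}"

definition finer_than_euclidean :: "real topology \<Rightarrow> bool" where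
  "finer_than_euclidean \<tau> \<longleftrightarrow> topspace \<tau> = UNIV \<and> (\<forall>U. openin euclideanreal U \<longrightarrow> openin \<tau> U)"

end

theory Submission
  imports Defs
begin

text \<open>Let \<open>c\<close> be a continuous injection of a connected space \<open>X\<close> into \<open>\<real>\<close>
and \<open>S\<close> the preimage of an interval. A separation of \<open>S\<close> by open sets
\<open>E\<^sub>1 \<ni> p\<close>, \<open>E\<^sub>2 \<ni> q\<close> with \<open>c p < c q\<close> extends to a separation of \<open>X\<close>: cut \<open>E\<^sub>1\<close>
at \<open>c q\<close> and \<open>E\<^sub>2\<close> at \<open>c p\<close>, then attach everything below \<open>c p\<close> to the first
piece and everything above \<open>c q\<close> to the second. By injectivity the cuts lose
only the points \<open>q\<close> and \<open>p\<close>, which lie in the other piece anyway. Both parts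
of the theorem are instances: the identity of \<open>(\<real>, \<tau>)\<close>, and the first
projection restricted to the graph.\<close>

lemma preimage_interval_not_separated:
  fixes c :: "'a \<Rightarrow> real"
  assumes conn: "connected_space X"
    and cont: "continuous_map X euclideanreal c"
    and inj: "inj_on c (topspace X)"
    and I: "is_interval I"
    and S: "S = {x \<in> topspace X. c x \<in> I}"
    and E1: "openin X E1" and E2: "openin X E2"
    and cov: "S \<subseteq> E1 \<union> E2" and dis: "E1 \<inter> E2 \<inter> S = {}"
    and p: "p \<in> E1 \<inter> S" and q: "q \<in> E2 \<inter> S" and pq: "c p < c q"
  shows False
proof -
  have below: "openin X {x \<in> topspace X. c x < t}"
    and above: "openin X {x \<in> topspace X. c x > t}" for t
    using openin_continuous_map_preimage[OF cont, of "{..<t}"]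
      openin_continuous_map_preimage[OF cont, of "{t<..}"] by auto
  define A where "A = (E1 \<inter> {x \<in> topspace X. c x < c q}) \<union> {x \<in> topspace X. c x < c p}"
  define B where "B = (E2 \<inter> {x \<in> topspace X. c x > c p}) \<union> {x \<in> topspace X. c x > c q}"
  have between_in_S: "x \<in> S" if "x \<in> topspace X" "c p \<le> c x" "c x \<le> c q" for x
    using I p q S that unfolding is_interval_1 by auto
  have "openin X A" unfolding A_def using E1 below by (intro openin_Un openin_Int)
  moreover have "openin X B" unfolding B_def using E2 above by (intro openin_Un openin_Int)
  moreover have "topspace X \<subseteq> A \<union> B"
  proof
    fix x assume x: "x \<in> topspace X"
    consider "c x < c p" | "c q < c x" | "c p \<le> c x" "c x \<le> c q"
      by linarith
    then show "x \<in> A \<union> B"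
    proof cases
      case 3
      then have "x \<in> S" using between_in_S x by blast
      with cov consider "x \<in> E1" | "x \<in> E2" by blast
      then show ?thesis
      proof cases
        case 1
        with \<open>x \<in> S\<close> q dis have "x \<noteq> q" by blast
        then have "c x \<noteq> c q" using inj x q S by (auto dest: inj_onD)
        with 1 3 x show ?thesis unfolding A_def by auto
      next
        case 2
        with \<open>x \<in> S\<close> p dis have "x \<noteq> p" by blast
        then have "c x \<noteq> c p" using inj x p S by (auto dest: inj_onD)
        with 2 3 x show ?thesis unfolding B_def by auto
      qed
    qed (use x in \<open>auto simp: A_def B_def\<close>)
  qed
  moreover have "A \<inter> B = {}"
  proof -
    have "x \<in> E1 \<inter> E2 \<inter> S" if "x \<in> A" "x \<in> B" for x
      using that pq between_in_S[of x] unfolding A_def B_def by auto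
    then show ?thesis using dis by blast
  qed
  moreover have "A \<noteq> {}" "B \<noteq> {}"
    using p q pq S unfolding A_def B_def by auto
  ultimately show False
    by (rule connected_spaceD[OF conn])
qed

lemma connectedin_preimage_interval_injective:
  fixes c :: "'a \<Rightarrow> real"
  assumes conn: "connected_space X"
    and cont: "continuous_map X euclideanreal c"
    and inj: "inj_on c (topspace X)"
    and I: "is_interval I"
  shows "connectedin X {x \<in> topspace X. c x \<in> I}"
proof -
  let ?S = "{x \<in> topspace X. c x \<in> I}"
  have False
    if sep: "openin X E1" "openin X E2" "?S \<subseteq> E1 \<union> E2" "E1 \<inter> E2 \<inter> ?S = {}"
      and p: "p \<in> E1 \<inter> ?S" and q: "q \<in> E2 \<inter> ?S" for E1 E2 p q
  proof -
    have "c p \<noteq> c q"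
      using p q sep(4) inj by (auto dest: inj_onD)
    then consider "c p < c q" | "c q < c p" by linarith
    then show False
    proof cases
      case 1
      show False
        using preimage_interval_not_separated[OF conn cont inj I refl sep p q 1] .
    next
      case 2
      have "?S \<subseteq> E2 \<union> E1" "E2 \<inter> E1 \<inter> ?S = {}" using sep by auto
      with 2 show False
        using preimage_interval_not_separated[OF conn cont inj I refl sep(2,1) _ _ q p] by blast
    qed
  qed
  then show ?thesis
    unfolding connectedin by blast
qed

theorem lemma5:
  shows "(\<forall>\<tau>. finer_than_euclidean \<tau> \<and> connected_space \<tau> \<longrightarrow>
            (\<forall>I::real set. is_interval I \<longrightarrow> connectedin \<tau> I))
       \<and> (\<forall>F::real \<Rightarrow> real. connected (fgraph F) \<longrightarrow>
            (\<forall>I::real set. is_interval I \<longrightarrow> connected (fgraph F \<inter> (I \<times> UNIV))))"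
proof (intro conjI allI impI)
  fix \<tau> :: "real topology" and I :: "real set"
  assume \<tau>: "finer_than_euclidean \<tau> \<and> connected_space \<tau>" and I: "is_interval I"
  then have top: "topspace \<tau> = UNIV"
    by (simp add: finer_than_euclidean_def)
  have "continuous_map \<tau> euclideanreal (\<lambda>x. x)"
    using \<tau> unfolding continuous_map_def finer_than_euclidean_def by simp
  then have "connectedin \<tau> {x \<in> topspace \<tau>. x \<in> I}"
    using \<tau> I by (intro connectedin_preimage_interval_injective) auto
  then show "connectedin \<tau> I" using top by simp
next
  fix F :: "real \<Rightarrow> real" and I :: "real set"
  let ?S = "{z \<in> topspace (top_of_set (fgraph F)). fst z \<in> I}"
  assume "connected (fgraph F)" and I: "is_interval I"
  then have "connected_space (top_of_set (fgraph F))"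
    by (simp add: connected_space_subtopology connectedin_iff_connected)
  moreover have "continuous_map (top_of_set (fgraph F)) euclideanreal fst"
    by (simp add: continuous_on_fst)
  moreover have "inj_on fst (topspace (top_of_set (fgraph F)))"
    by (auto simp: fgraph_def inj_on_def)
  ultimately have "connectedin (top_of_set (fgraph F)) ?S"
    using I by (rule connectedin_preimage_interval_injective)
  moreover have "?S = fgraph F \<inter> (I \<times> UNIV)" by auto
  ultimately show "connected (fgraph F \<inter> (I \<times> UNIV))"
    by (simp add: connectedin_subtopology connectedin_iff_connected)
qed

end
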